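(* Let $a,b,c,d>0$ and let $G_B:\mathbb R^2\to\mathbb R^2$ be given by $G_B(0)=0$ and $G_B(u)=\frac{1}{|u|}\big((au_1^2+bu_2^2)u_1,\ (cu_1^2+du_2^2)u_2\big)$ for $u\neq0$. (i) If $\frac{\max\{a,d\}}{2}-2\sqrt{ad}\le b+c\le 2\sqrt{ad}$, then $G_B$ is monotone. If $\frac{\max\{a,d\}}{2}-2\sqrt{ad}< b+c< 2\sqrt{ad}$, then $G_B$ is $3$-monotone. (ii) Let $M=\max\{a,d\}$ and $m=\min\{a,d\}$. (a) If $M/m\le16$, then the non-strict condition in (i) is equivalent to $b+c\le2\sqrt{ad}$, and the strict condition in (i) is equivalent to $b+c<2\sqrt{ad}$. (b) If $M/m=64$, then the non-strict condition in (i) is equivalent to $b+c=2\sqrt{ad}$, while the strict condition in (i) cannot hold. (c) If $M/m>64$, then the non-strict condition in (i) cannot hold.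
   Context: A map $F:\mathbb R^n\to\mathbb R^n$ is monotone if $(F(u)-F(v))\cdot(u-v)\ge0$ for all $u,v$; for $\alpha>0$ it is $\alpha$-monotone if there is $C>0$ with $(F(u)-F(v))\cdot(u-v)\ge C|u-v|^\alpha$ for all $u,v\in\mathbb R^n$. $|\cdot|$ is the Euclidean norm. *)

theory Defs
  imports "HOL-Analysis.Analysis"
begin

definition monotone_map :: "(real^'n \<Rightarrow> real^'n) \<Rightarrow> bool" where
  "monotone_map F \<longleftrightarrow> (\<forall>u v. (F u - F v) \<bullet> (u - v) \<ge> 0)"

definition alpha_monotone :: "real \<Rightarrow> (real^'n \<Rightarrow> real^'n) \<Rightarrow> bool" where
  "alpha_monotone \<alpha> F \<longleftrightarrow>
     (\<exists>C>0. \<forall>u v. (F u - F v) \<bullet> (u - v) \<ge> C * norm (u - v) powr \<alpha>)"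

definition G_B :: "real \<Rightarrow> real \<Rightarrow> real \<Rightarrow> real \<Rightarrow> real^2 \<Rightarrow> real^2" where
  "G_B a b c d u = (if u = 0 then 0 else
     (1 / norm u) *\<^sub>R (\<chi> i. if i = 1 then (a * (u$1)^2 + b * (u$2)^2) * u$1
                              else (c * (u$1)^2 + d * (u$2)^2) * u$2))"

end

theory Submission
  imports Defs
begin

(*
  Along a segment x t = v + t w the function t \<mapsto> w \<bullet> G_B (x t) is continuous, and wherever
  x t \<noteq> 0 its derivative is Q (x t) w / |x t|^3, where Q = GB_form is |x|^3 times the Jacobian
  quadratic form w \<bullet> DG_B(x) w.  For fixed x, Q is a quadratic form in w whose entries are
  polynomials in p = x1^2, q = x2^2; the conditions on a, b, c, d make every coefficient of its
  determinant (a quartic in p, q) nonnegative, so the determinant is at least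
  min(ac, bd)/4 (p + q)^4, and det/trace bounds Q below by \<kappa> |x|^4 |w|^2.  Hence the derivative
  is at least \<kappa> |w| |x t \<bullet> w|, and since x t \<bullet> w is affine in t, integrating over [0, 1] gives
  (G_B (v + w) - G_B v) \<bullet> w \<ge> \<kappa> |w|^3 / 4.  So the non-strict condition already yields
  3-monotonicity.  Part (ii) is arithmetic in r = M/m, since M/2 - 2 sqrt(Mm) = m (r/2 - 2 sqrt r).
*)

section \<open>One-variable calculus\<close>

lemma DERIV_nonneg_imp_increasing_except:
  fixes f :: "real \<Rightarrow> real"
  assumes cont: "continuous_on {0..1} f"
    and der: "\<And>t. 0 < t \<Longrightarrow> t < 1 \<Longrightarrow> t \<noteq> t0 \<Longrightarrow>
                \<exists>D. (f has_real_derivative D) (at t) \<and> D \<ge> 0"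
  shows "f 0 \<le> f 1"
proof (cases "0 < t0 \<and> t0 < 1")
  case True
  have "f 0 \<le> f t0"
    by (rule DERIV_nonneg_imp_increasing_open) (use True der in \<open>auto intro: continuous_on_subset[OF cont]\<close>)
  also have "f t0 \<le> f 1"
    by (rule DERIV_nonneg_imp_increasing_open) (use True der in \<open>auto intro: continuous_on_subset[OF cont]\<close>)
  finally show ?thesis .
next
  case False
  show ?thesis
    by (rule DERIV_nonneg_imp_increasing_open) (use False der cont in auto)
qed

lemma signed_square_has_derivative: "((\<lambda>y. y * \<bar>y\<bar>) has_real_derivative 2 * \<bar>y\<bar>) (at y)"
proof (cases "y = 0")
  case True
  have "((\<lambda>z::real. \<bar>z\<bar>) \<longlongrightarrow> 0) (at 0)"
    using tendsto_rabs[OF tendsto_ident_at[of "0::real" UNIV]] by simp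
  moreover have "\<forall>\<^sub>F z in at (0::real). \<bar>z\<bar> = (z * \<bar>z\<bar> - 0 * \<bar>0\<bar>) / (z - 0)"
    unfolding eventually_at_filter by (rule always_eventually) simp
  ultimately have "((\<lambda>z. (z * \<bar>z\<bar> - 0 * \<bar>0\<bar>) / (z - 0)) \<longlongrightarrow> 2 * \<bar>0\<bar>) (at (0::real))"
    by (simp add: Lim_transform_eventually)
  then show ?thesis
    using True by (simp add: has_field_derivative_iff)
next
  case False
  then consider "y > 0" | "y < 0" by linarith
  then show ?thesis
  proof cases
    case 1
    have "((\<lambda>y. y * y) has_real_derivative 2 * \<bar>y\<bar>) (at y)"
      using 1 by (auto intro!: derivative_eq_intros)
    then show ?thesis
      by (rule has_field_derivative_transform_within_open[where S = "{0<..}"]) (use 1 in auto)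
  next
    case 2
    have "((\<lambda>y. - (y * y)) has_real_derivative 2 * \<bar>y\<bar>) (at y)"
      using 2 by (auto intro!: derivative_eq_intros)
    then show ?thesis
      by (rule has_field_derivative_transform_within_open[where S = "{..<0}"]) (use 2 in auto)
  qed
qed

lemma signed_square_increment_ge:
  fixes s l :: real
  assumes "l > 0"
  shows "l\<^sup>2 \<le> 2 * ((s + l) * \<bar>s + l\<bar> - s * \<bar>s\<bar>)"
proof -
  define X where "X = (s + l) * \<bar>s + l\<bar> - s * \<bar>s\<bar>"
  have ll: "0 < l * l"
    using assms by simp
  consider "s \<ge> 0" | "s \<le> - l" | "- l < s" "s < 0" by linarith
  then show ?thesis
  proof cases
    case 1
    then have "X = l * (2 * s + l)"
      using assms by (simp add: X_def algebra_simps)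
    also have "\<dots> \<ge> l * l"
      using 1 assms by (intro mult_left_mono) auto
    finally show ?thesis
      using ll unfolding X_def[symmetric] power2_eq_square by linarith
  next
    case 2
    then have "X = l * (- 2 * s - l)"
      using assms by (simp add: X_def algebra_simps)
    also have "\<dots> \<ge> l * l"
      using 2 assms by (intro mult_left_mono) auto
    finally show ?thesis
      using ll unfolding X_def[symmetric] power2_eq_square by linarith
  next
    case 3
    then have "2 * X = l\<^sup>2 + (2 * s + l)\<^sup>2"
      by (simp add: X_def power2_eq_square algebra_simps)
    then show ?thesis
      unfolding X_def by simp
  qed
qed

lemma increment_ge_of_deriv_ge_abs_affine:
  fixes f :: "real \<Rightarrow> real"
  assumes l: "l > 0" and K: "K \<ge> 0" and cont: "continuous_on {0..1} f"
    and der: "\<And>t. 0 < t \<Longrightarrow> t < 1 \<Longrightarrow> t \<noteq> t0 \<Longrightarrow>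
                \<exists>D. (f has_real_derivative D) (at t) \<and> K * \<bar>s + t * l\<bar> \<le> D"
  shows "K * l / 4 \<le> f 1 - f 0"
proof -
  define h where "h t = (s + t * l) * \<bar>s + t * l\<bar> / (2 * l)" for t
  have dh: "(h has_real_derivative \<bar>s + t * l\<bar>) (at t)" for t
  proof -
    have "((\<lambda>t. s + t * l) has_real_derivative l) (at t)"
      by (auto intro!: derivative_eq_intros)
    from DERIV_cdivide[OF DERIV_chain2[OF signed_square_has_derivative this], of "2 * l"]
    show ?thesis
      using l by (simp add: h_def[abs_def])
  qed
  have increasing: "(\<lambda>t. f t - K * h t) 0 \<le> (\<lambda>t. f t - K * h t) 1"
  proof (rule DERIV_nonneg_imp_increasing_except)
    show "continuous_on {0..1} (\<lambda>t. f t - K * h t)"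
      using cont dh by (intro continuous_intros) (auto intro: DERIV_isCont continuous_at_imp_continuous_on)
    fix t :: real
    assume "0 < t" "t < 1" "t \<noteq> t0"
    then obtain D where "(f has_real_derivative D) (at t)" "K * \<bar>s + t * l\<bar> \<le> D"
      using der by blast
    then show "\<exists>D. ((\<lambda>t. f t - K * h t) has_real_derivative D) (at t) \<and> D \<ge> 0"
      by (intro exI[of _ "D - K * \<bar>s + t * l\<bar>"] conjI DERIV_diff DERIV_cmult dh) auto
  qed
  define X where "X = (s + l) * \<bar>s + l\<bar> - s * \<bar>s\<bar>"
  have "h 1 - h 0 = X / (2 * l)"
    by (simp add: h_def X_def diff_divide_distrib)
  also have "\<dots> \<ge> l / 4"
    using signed_square_increment_ge[OF l, of s] l by (simp add: X_def field_simps power2_eq_square)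
  finally have "K * (l / 4) \<le> K * (h 1 - h 0)"
    using K by (rule mult_left_mono)
  also have "\<dots> \<le> f 1 - f 0"
    using increasing by (simp add: algebra_simps)
  finally show ?thesis
    by simp
qed

section \<open>Coordinates of G_B\<close>

(* At the origin sqrt 0 = 0 and division by zero give the value 0, as required by G_B. *)
definition GB_component :: "real \<Rightarrow> real \<Rightarrow> real \<Rightarrow> real \<Rightarrow> real" where
  "GB_component a b x y = (a * x\<^sup>2 + b * y\<^sup>2) * x / sqrt (x\<^sup>2 + y\<^sup>2)"

lemma norm_vec2: "norm (u :: real^2) = sqrt ((u$1)\<^sup>2 + (u$2)\<^sup>2)"
  by (simp add: norm_vec_def L2_set_def sum_2)

lemma inner_vec2: "(u :: real^2) \<bullet> v = u$1 * v$1 + u$2 * v$2"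
  by (simp add: inner_vec_def sum_2)

lemma G_B_nth:
  "G_B a b c d u $ 1 = GB_component a b (u$1) (u$2)"
  "G_B a b c d u $ 2 = GB_component d c (u$2) (u$1)"
  by (auto simp: G_B_def GB_component_def norm_vec2 vec_eq_iff forall_2 add.commute mult.commute)

lemma abs_GB_component_le:
  assumes "a \<ge> 0" "b \<ge> 0"
  shows "\<bar>GB_component a b x y\<bar> \<le> (a + b) * (x\<^sup>2 + y\<^sup>2)"
proof -
  have "\<bar>x\<bar> / sqrt (x\<^sup>2 + y\<^sup>2) \<le> 1"
    using real_sqrt_sum_squares_ge1[of "\<bar>x\<bar>" y] by (auto simp: divide_le_eq_1 less_le)
  moreover have "\<bar>GB_component a b x y\<bar> = (a * x\<^sup>2 + b * y\<^sup>2) * (\<bar>x\<bar> / sqrt (x\<^sup>2 + y\<^sup>2))"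
    using assms by (simp add: GB_component_def abs_mult)
  ultimately have "\<bar>GB_component a b x y\<bar> \<le> (a * x\<^sup>2 + b * y\<^sup>2) * 1"
    using assms by (metis mult_left_mono add_nonneg_nonneg zero_le_mult_iff zero_le_power2)
  also have "\<dots> \<le> (a + b) * (x\<^sup>2 + y\<^sup>2)"
    using assms by (simp add: algebra_simps add_mono mult_left_mono)
  finally show ?thesis .
qed

lemma isCont_GB_component:
  assumes "a \<ge> 0" "b \<ge> 0" and f: "isCont f t" and g: "isCont g t"
  shows "isCont (\<lambda>s. GB_component a b (f s) (g s)) t"
proof (cases "f t = 0 \<and> g t = 0")
  case False
  then have "sqrt ((f t)\<^sup>2 + (g t)\<^sup>2) \<noteq> 0"
    by simp
  then show ?thesis
    unfolding GB_component_def using f g by (intro continuous_intros)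
next
  case True
  have "isCont (\<lambda>s. (a + b) * ((f s)\<^sup>2 + (g s)\<^sup>2)) t"
    using f g by (intro continuous_intros)
  then have "((\<lambda>s. (a + b) * ((f s)\<^sup>2 + (g s)\<^sup>2)) \<longlongrightarrow> 0) (at t)"
    using True by (simp add: isCont_def)
  then have "((\<lambda>s. GB_component a b (f s) (g s)) \<longlongrightarrow> 0) (at t)"
    by (rule Lim_null_comparison[rotated]) (use abs_GB_component_le[OF assms(1,2)] in auto)
  then show ?thesis
    using True by (simp add: isCont_def GB_component_def)
qed

section \<open>The Jacobian form and its coercivity\<close>

(* For x \<noteq> 0, GB_form x w / |x|^3 is the Jacobian form w \<bullet> DG_B(x) w. *)
definition GB_form :: "real \<Rightarrow> real \<Rightarrow> real \<Rightarrow> real \<Rightarrow> real \<Rightarrow> real \<Rightarrow> real \<Rightarrow> real \<Rightarrow> real" where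
  "GB_form a b c d x1 x2 w1 w2 =
     (x1\<^sup>2 + x2\<^sup>2) * ((3*a*x1\<^sup>2 + b*x2\<^sup>2) * w1\<^sup>2 + 2*(b + c)*x1*x2*w1*w2 + (c*x1\<^sup>2 + 3*d*x2\<^sup>2) * w2\<^sup>2)
     - ((a*x1\<^sup>2 + b*x2\<^sup>2) * x1 * w1 + (c*x1\<^sup>2 + d*x2\<^sup>2) * x2 * w2) * (x1 * w1 + x2 * w2)"

lemma GB_component_pair_has_derivative:
  fixes v1 v2 w1 w2 t :: real
  defines "x1 \<equiv> v1 + t * w1" and "x2 \<equiv> v2 + t * w2"
  assumes nz: "x1 \<noteq> 0 \<or> x2 \<noteq> 0"
  shows "((\<lambda>s. w1 * GB_component a b (v1 + s * w1) (v2 + s * w2)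
              + w2 * GB_component d c (v2 + s * w2) (v1 + s * w1))
          has_real_derivative GB_form a b c d x1 x2 w1 w2 / sqrt (x1\<^sup>2 + x2\<^sup>2) ^ 3) (at t)"
proof -
  define P where "P s = w1 * ((a * (v1 + s * w1)\<^sup>2 + b * (v2 + s * w2)\<^sup>2) * (v1 + s * w1))
                      + w2 * ((c * (v1 + s * w1)\<^sup>2 + d * (v2 + s * w2)\<^sup>2) * (v2 + s * w2))" for s
  define J where "J = (3*a*x1\<^sup>2 + b*x2\<^sup>2) * w1\<^sup>2 + 2*(b + c)*x1*x2*w1*w2 + (c*x1\<^sup>2 + 3*d*x2\<^sup>2) * w2\<^sup>2"
  define N where "N s = sqrt ((v1 + s * w1)\<^sup>2 + (v2 + s * w2)\<^sup>2)" for s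
  have pos: "0 < x1\<^sup>2 + x2\<^sup>2"
    using nz by (simp add: sum_power2_gt_zero_iff)
  then have N2: "(N t)\<^sup>2 = x1\<^sup>2 + x2\<^sup>2" and "N t > 0"
    by (simp_all add: N_def x1_def x2_def)
  have dP: "(P has_real_derivative J) (at t)"
    unfolding P_def[abs_def] J_def x1_def x2_def
    by (rule derivative_eq_intros refl)+ (simp add: power2_eq_square algebra_simps)
  have "((\<lambda>s. (v1 + s * w1)\<^sup>2 + (v2 + s * w2)\<^sup>2) has_real_derivative 2 * x1 * w1 + 2 * x2 * w2) (at t)"
    unfolding x1_def x2_def by (rule derivative_eq_intros refl)+ (simp add: algebra_simps)
  from DERIV_chain2[OF DERIV_real_sqrt[OF pos[unfolded x1_def x2_def]] this[unfolded x1_def x2_def]]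
  have dN: "(N has_real_derivative inverse (N t) / 2 * (2 * x1 * w1 + 2 * x2 * w2)) (at t)"
    by (simp add: N_def[abs_def] x1_def x2_def)
  have "((\<lambda>s. P s / N s) has_real_derivative
      (J * N t - P t * (inverse (N t) / 2 * (2 * x1 * w1 + 2 * x2 * w2))) / (N t * N t)) (at t)"
    using DERIV_divide[OF dP dN] \<open>N t > 0\<close> by simp
  moreover have "(\<lambda>s. P s / N s) = (\<lambda>s. w1 * GB_component a b (v1 + s * w1) (v2 + s * w2)
                                      + w2 * GB_component d c (v2 + s * w2) (v1 + s * w1))"
    by (simp add: P_def N_def GB_component_def add_divide_distrib add.commute mult.commute)
  moreover have "(J * N t - P t * (inverse (N t) / 2 * (2 * x1 * w1 + 2 * x2 * w2))) / (N t * N t)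
      = GB_form a b c d x1 x2 w1 w2 / N t ^ 3"
    using \<open>N t > 0\<close> N2 unfolding GB_form_def P_def J_def x1_def[symmetric] x2_def[symmetric]
    by (simp add: field_simps) algebra
  ultimately show ?thesis
    by (simp add: N_def x1_def x2_def)
qed

lemma quadratic_form_ge_det_div_trace:
  fixes A B C w1 w2 :: real
  assumes "A + C > 0"
  shows "(A * C - B\<^sup>2) / (A + C) * (w1\<^sup>2 + w2\<^sup>2) \<le> A * w1\<^sup>2 + 2 * B * w1 * w2 + C * w2\<^sup>2"
proof -
  have "(A + C) * (A * w1\<^sup>2 + 2 * B * w1 * w2 + C * w2\<^sup>2)
        = (A * w1 + B * w2)\<^sup>2 + (C * w2 + B * w1)\<^sup>2 + (A * C - B\<^sup>2) * (w1\<^sup>2 + w2\<^sup>2)"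
    by (simp add: power2_eq_square algebra_simps)
  also have "\<dots> \<ge> (A * C - B\<^sup>2) * (w1\<^sup>2 + w2\<^sup>2)"
    by simp
  finally show ?thesis
    using assms by (simp add: pos_divide_le_eq mult.commute)
qed

lemma power4_add_le: "(p + q) ^ 4 \<le> 8 * (p ^ 4 + q ^ 4 :: real)"
proof -
  have "8 * (p ^ 4 + q ^ 4) - (p + q) ^ 4 = (p - q)\<^sup>2 * (2 * p\<^sup>2 + 2 * q\<^sup>2 + 5 * (p + q)\<^sup>2)"
    by algebra
  also have "\<dots> \<ge> 0" by simp
  finally show ?thesis by simp
qed

lemma coefficient_square_bound:
  fixes a b c d :: real
  assumes pos: "a > 0" "b > 0" "c > 0" "d > 0"
    and lo: "max a d / 2 - 2 * sqrt (a * d) \<le> b + c" and hi: "b + c \<le> 2 * sqrt (a * d)"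
  shows "(b + (c - a) / 2)\<^sup>2 \<le> 6 * a * d + 3 * a * c"
proof -
  define g where "g = sqrt (a * d)"
  have g2: "g\<^sup>2 = a * d"
    using pos by (simp add: g_def)
  consider "b + (c - a) / 2 \<ge> 0" | "b + (c - a) / 2 < 0" "d \<le> a" | "b + (c - a) / 2 < 0" "a < d"
    by linarith
  then show ?thesis
  proof cases
    case 1
    have "b + (c - a) / 2 \<le> 2 * g"
      using hi pos unfolding g_def by argo
    then have "(b + (c - a) / 2)\<^sup>2 \<le> (2 * g)\<^sup>2"
      using 1 by (intro power_mono) auto
    moreover have "0 < a * c" "0 < a * d"
      using pos by simp_all
    ultimately show ?thesis
      using g2 by (simp add: algebra_simps)
  next
    case 2
    have "a * d \<le> a * a"
      using 2 pos by simp
    then have "g\<^sup>2 \<le> a\<^sup>2"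
      using g2 by (simp add: power2_eq_square)
    then have "g \<le> a"
      using pos by (auto intro: power2_le_imp_le)
    have "a / 2 - 2 * g \<le> b + c"
      using lo 2 by (simp add: g_def max_def)
    then have "- (b + (c - a) / 2) \<le> c / 2 + 2 * g"
      by argo
    then have "(b + (c - a) / 2)\<^sup>2 \<le> (c / 2 + 2 * g)\<^sup>2"
      using 2 by (metis power2_minus power_mono neg_0_le_iff_le less_eq_real_def)
    also have "\<dots> = c * c / 4 + 2 * (c * g) + 4 * (a * d)"
      using g2 by (simp add: power2_eq_square field_simps)
    also have "\<dots> \<le> 5 / 2 * (c * g) + 4 * (a * d)"
      using hi pos mult_left_mono[of c "2 * g" c] unfolding g_def by simp
    also have "\<dots> \<le> 3 * (c * a) + 6 * (a * d)"
      using mult_left_mono[OF \<open>g \<le> a\<close>, of c] pos mult_pos_pos[OF pos(1,4)] mult_pos_pos[OF pos(3,1)]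
      by linarith
    finally show ?thesis
      by (simp add: algebra_simps)
  next
    case 3
    have "- (b + (c - a) / 2) \<le> a / 2"
      using pos by argo
    then have "(b + (c - a) / 2)\<^sup>2 \<le> (a / 2)\<^sup>2"
      using 3 by (metis power2_minus power_mono neg_0_le_iff_le less_eq_real_def)
    also have "\<dots> \<le> a * d / 4"
      using 3 pos by (simp add: power2_eq_square)
    also have "\<dots> \<le> 6 * (a * d) + 3 * (a * c)"
      using mult_pos_pos[OF pos(1,4)] mult_pos_pos[OF pos(1,3)] by linarith
    finally show ?thesis
      by (simp add: algebra_simps)
  qed
qed

lemma coefficient_product_bound:
  fixes a b c d :: real
  assumes pos: "a > 0" "b > 0" "c > 0" "d > 0" and hi: "b + c \<le> 2 * sqrt (a * d)"
  shows "2 * (b + (c - a) / 2) * (c + (b - d) / 2) \<le> 13 * a * d + b * c"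
proof -
  define x where "x = b + (c - a) / 2"
  define y where "y = c + (b - d) / 2"
  have x_le: "x \<le> b + c / 2" and neg_x_le: "- x \<le> a / 2"
    using pos unfolding x_def by argo+
  have y_le: "y \<le> c + b / 2" and neg_y_le: "- y \<le> d / 2"
    using pos unfolding y_def by argo+
  have xy: "x * y \<le> a * d / 4 + 9 / 16 * (b + c)\<^sup>2"
  proof -
    consider "x \<ge> 0" "y \<ge> 0" | "x < 0" "y < 0" | "x * y \<le> 0"
      by (metis linorder_not_le mult_nonneg_nonpos mult_nonpos_nonneg less_imp_le)
    then show ?thesis
    proof cases
      case 1
      then have "x * y \<le> (b + c / 2) * (c + b / 2)"
        using x_le y_le pos by (intro mult_mono) auto
      also have "\<dots> = 9 / 16 * (b + c)\<^sup>2 - (b - c)\<^sup>2 / 16"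
        by (simp add: power2_eq_square field_simps)
      finally show ?thesis
        using zero_le_power2[of "b - c"] mult_pos_pos[OF pos(1,4)] by linarith
    next
      case 2
      then have "(- x) * (- y) \<le> (a / 2) * (d / 2)"
        using neg_x_le neg_y_le 2 pos by (intro mult_mono) auto
      then have "x * y \<le> a * d / 4"
        by simp
      then show ?thesis
        by (simp add: add_increasing2)
    next
      case 3
      then show ?thesis
        using zero_le_power2[of "b + c"] mult_pos_pos[OF pos(1,4)] by linarith
    qed
  qed
  have "(b + c)\<^sup>2 \<le> (2 * sqrt (a * d))\<^sup>2"
    using hi pos by (intro power_mono) auto
  then have "(b + c)\<^sup>2 \<le> 4 * (a * d)"
    using pos by (simp add: power_mult_distrib)
  then have "2 * (x * y) \<le> 13 * (a * d) + b * c"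
    using xy mult_pos_pos[OF pos(1,4)] mult_pos_pos[OF pos(2,3)] by linarith
  then show ?thesis
    unfolding x_def y_def by (metis mult.assoc)
qed

lemma GB_determinant_ge:
  fixes a b c d \<alpha> \<beta> p q :: real
  assumes pos: "a > 0" "b > 0" "c > 0" "d > 0" and pq: "p \<ge> 0" "q \<ge> 0"
    and \<alpha>: "\<alpha>\<^sup>2 \<le> 6 * a * d + 3 * a * c" and \<beta>: "\<beta>\<^sup>2 \<le> 6 * a * d + 3 * b * d"
    and \<alpha>\<beta>: "2 * \<alpha> * \<beta> \<le> 13 * a * d + b * c"
  shows "min (a * c) (b * d) / 4 * (p + q) ^ 4
    \<le> (2*a*p\<^sup>2 + 3*a*p*q + b*q\<^sup>2) * (c*p\<^sup>2 + 3*d*p*q + 2*d*q\<^sup>2) - p * q * (\<alpha> * p + \<beta> * q)\<^sup>2"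
proof -
  define m where "m = min (a * c) (b * d)"
  have "m / 4 * (p + q) ^ 4 \<le> 2 * m * (p ^ 4 + q ^ 4)"
    using power4_add_le[of p q] pos by (simp add: m_def)
  also have "\<dots> \<le> 2 * a * c * p ^ 4 + 2 * b * d * q ^ 4"
    using mult_right_mono[of m "a * c" "p ^ 4"] mult_right_mono[of m "b * d" "q ^ 4"]
    by (simp add: m_def algebra_simps)
  also have "\<dots> \<le> 2 * a * c * p ^ 4 + (6*a*d + 3*a*c - \<alpha>\<^sup>2) * p ^ 3 * q
      + (13*a*d + b*c - 2*\<alpha>*\<beta>) * p\<^sup>2 * q\<^sup>2 + (6*a*d + 3*b*d - \<beta>\<^sup>2) * p * q ^ 3 + 2 * b * d * q ^ 4"
    using \<alpha> \<beta> \<alpha>\<beta> pq by (simp add: add_increasing2 add_increasing)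
  also have "\<dots> = (2*a*p\<^sup>2 + 3*a*p*q + b*q\<^sup>2) * (c*p\<^sup>2 + 3*d*p*q + 2*d*q\<^sup>2) - p * q * (\<alpha> * p + \<beta> * q)\<^sup>2"
    by algebra
  finally show ?thesis
    by (simp add: m_def)
qed

lemma GB_trace_bounds:
  fixes a b c d p q :: real
  defines "T \<equiv> (2*a*p\<^sup>2 + 3*a*p*q + b*q\<^sup>2) + (c*p\<^sup>2 + 3*d*p*q + 2*d*q\<^sup>2)"
  assumes pos: "a > 0" "b > 0" "c > 0" "d > 0" and pq: "p \<ge> 0" "q \<ge> 0" "p + q > 0"
  shows "0 < T" and "T \<le> (2*a + b + c + 2*d) * (p + q)\<^sup>2"
proof -
  have "T = 2*a*p\<^sup>2 + b*q\<^sup>2 + (c*p\<^sup>2 + 3*(a + d)*(p*q) + 2*d*q\<^sup>2)"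
    unfolding T_def by algebra
  moreover have "0 < 2*a*p\<^sup>2 + b*q\<^sup>2"
    using pq pos by (cases "p = 0") (auto intro: add_pos_nonneg add_nonneg_pos)
  moreover have "c*p\<^sup>2 + 3*(a + d)*(p*q) + 2*d*q\<^sup>2 \<ge> 0"
    using pq pos by simp
  ultimately show "0 < T"
    by linarith
  have "(2*a + b + c + 2*d) * (p + q)\<^sup>2 - T = (b + 2*d)*p\<^sup>2 + (a + 2*b + 2*c + d)*(p*q) + (2*a + c)*q\<^sup>2"
    unfolding T_def by algebra
  moreover have "(b + 2*d)*p\<^sup>2 + (a + 2*b + 2*c + d)*(p*q) + (2*a + c)*q\<^sup>2 \<ge> 0"
    using pq pos by simp
  ultimately show "T \<le> (2*a + b + c + 2*d) * (p + q)\<^sup>2"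
    by linarith
qed

lemma GB_form_ge:
  fixes a b c d x1 x2 w1 w2 :: real
  assumes pos: "a > 0" "b > 0" "c > 0" "d > 0"
    and lo: "max a d / 2 - 2 * sqrt (a * d) \<le> b + c" and hi: "b + c \<le> 2 * sqrt (a * d)"
  shows "min (a * c) (b * d) / (4 * (2*a + b + c + 2*d)) * (x1\<^sup>2 + x2\<^sup>2)\<^sup>2 * (w1\<^sup>2 + w2\<^sup>2)
    \<le> GB_form a b c d x1 x2 w1 w2"
proof (cases "x1 = 0 \<and> x2 = 0")
  case True
  then show ?thesis by (simp add: GB_form_def)
next
  case False
  define p where "p = x1\<^sup>2"
  define q where "q = x2\<^sup>2"
  define \<alpha> where "\<alpha> = b + (c - a) / 2"
  define \<beta> where "\<beta> = c + (b - d) / 2"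
  define A where "A = 2*a*p\<^sup>2 + 3*a*p*q + b*q\<^sup>2"
  define C where "C = c*p\<^sup>2 + 3*d*p*q + 2*d*q\<^sup>2"
  define B where "B = x1 * x2 * (\<alpha> * p + \<beta> * q)"
  define K where "K = 2*a + b + c + 2*d"
  have pq: "p \<ge> 0" "q \<ge> 0" "p + q > 0"
    using False by (auto simp: p_def q_def add_pos_nonneg add_nonneg_pos)
  have "2 * \<alpha> = 2 * b + c - a" "2 * \<beta> = 2 * c + b - d"
    by (simp_all add: \<alpha>_def \<beta>_def)
  then have form: "GB_form a b c d x1 x2 w1 w2 = A * w1\<^sup>2 + 2 * B * w1 * w2 + C * w2\<^sup>2"
    unfolding GB_form_def A_def B_def C_def p_def q_def by algebra
  have \<alpha>: "\<alpha>\<^sup>2 \<le> 6 * a * d + 3 * a * c"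
    using coefficient_square_bound[OF pos lo hi] by (simp add: \<alpha>_def)
  \<comment> \<open>the hypotheses are invariant under (a, b, c, d) \<mapsto> (d, c, b, a)\<close>
  have \<beta>: "\<beta>\<^sup>2 \<le> 6 * a * d + 3 * b * d"
    using coefficient_square_bound[of d c b a] pos lo hi by (simp add: \<beta>_def ac_simps)
  have \<alpha>\<beta>: "2 * \<alpha> * \<beta> \<le> 13 * a * d + b * c"
    using coefficient_product_bound[OF pos hi] by (simp add: \<alpha>_def \<beta>_def)
  have "B\<^sup>2 = p * q * (\<alpha> * p + \<beta> * q)\<^sup>2"
    unfolding B_def p_def q_def by algebra
  then have det: "min (a * c) (b * d) / 4 * (p + q) ^ 4 \<le> A * C - B\<^sup>2"
    using GB_determinant_ge[OF pos pq(1,2) \<alpha> \<beta> \<alpha>\<beta>] by (simp add: A_def C_def)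
  have trace_pos: "A + C > 0" and trace_le: "A + C \<le> K * (p + q)\<^sup>2"
    using GB_trace_bounds[OF pos pq] by (simp_all add: A_def C_def K_def)
  have "min (a * c) (b * d) / (4 * K) * (p + q)\<^sup>2
      = (min (a * c) (b * d) / 4 * (p + q) ^ 4) / (K * (p + q)\<^sup>2)"
    using pq by (simp add: power2_eq_square power4_eq_xxxx)
  also have "\<dots> \<le> (A * C - B\<^sup>2) / (A + C)"
  proof (rule frac_le)
    show "0 \<le> A * C - B\<^sup>2"
      using pos pq by (intro order_trans[OF _ det]) simp
  qed (use det trace_pos trace_le in auto)
  finally have "min (a * c) (b * d) / (4 * K) * (p + q)\<^sup>2 * (w1\<^sup>2 + w2\<^sup>2)
      \<le> (A * C - B\<^sup>2) / (A + C) * (w1\<^sup>2 + w2\<^sup>2)"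
    by (rule mult_right_mono) simp
  also have "\<dots> \<le> GB_form a b c d x1 x2 w1 w2"
    unfolding form by (rule quadratic_form_ge_det_div_trace[OF trace_pos])
  finally show ?thesis
    by (simp add: K_def p_def q_def)
qed

section \<open>Monotonicity of G_B\<close>

lemma G_B_segment_eq:
  "w \<bullet> G_B a b c d (v + s *\<^sub>R w) = w$1 * GB_component a b (v$1 + s * w$1) (v$2 + s * w$2)
                                    + w$2 * GB_component d c (v$2 + s * w$2) (v$1 + s * w$1)"
  by (simp add: inner_vec2 G_B_nth)

lemma isCont_G_B_segment:
  assumes "a \<ge> 0" "b \<ge> 0" "c \<ge> 0" "d \<ge> 0"
  shows "isCont (\<lambda>s. w \<bullet> G_B a b c d (v + s *\<^sub>R w)) t"
  unfolding G_B_segment_eq using assms by (intro continuous_intros isCont_GB_component)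

lemma G_B_segment_has_derivative:
  fixes v w :: "real^2"
  assumes "v + t *\<^sub>R w \<noteq> 0"
  shows "((\<lambda>s. w \<bullet> G_B a b c d (v + s *\<^sub>R w)) has_real_derivative
           GB_form a b c d ((v + t *\<^sub>R w)$1) ((v + t *\<^sub>R w)$2) (w$1) (w$2) / norm (v + t *\<^sub>R w) ^ 3) (at t)"
proof -
  have "v$1 + t * w$1 \<noteq> 0 \<or> v$2 + t * w$2 \<noteq> 0"
    using assms by (simp add: vec_eq_iff forall_2)
  from GB_component_pair_has_derivative[OF this]
  show ?thesis
    unfolding G_B_segment_eq by (simp add: norm_vec2)
qed

lemma G_B_segment_deriv_ge:
  fixes v w :: "real^2"
  assumes "\<kappa> \<ge> 0" and x: "v + t *\<^sub>R w \<noteq> 0"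
    and coercive: "\<And>x1 x2 w1 w2. \<kappa> * (x1\<^sup>2 + x2\<^sup>2)\<^sup>2 * (w1\<^sup>2 + w2\<^sup>2) \<le> GB_form a b c d x1 x2 w1 w2"
  shows "\<kappa> * norm w * \<bar>v \<bullet> w + t * (norm w)\<^sup>2\<bar>
           \<le> GB_form a b c d ((v + t *\<^sub>R w)$1) ((v + t *\<^sub>R w)$2) (w$1) (w$2) / norm (v + t *\<^sub>R w) ^ 3"
proof -
  define x where "x = v + t *\<^sub>R w"
  have "norm x > 0"
    using x by (simp add: x_def)
  have "v \<bullet> w + t * (norm w)\<^sup>2 = x \<bullet> w"
    by (simp add: x_def inner_add_left power2_norm_eq_inner)
  then have "\<kappa> * norm w * \<bar>v \<bullet> w + t * (norm w)\<^sup>2\<bar> \<le> \<kappa> * norm w * (norm x * norm w)"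
    using Cauchy_Schwarz_ineq2[of x w] \<open>\<kappa> \<ge> 0\<close> by (simp add: mult_left_mono)
  also have "\<dots> = \<kappa> * ((norm x)\<^sup>2)\<^sup>2 * (norm w)\<^sup>2 / norm x ^ 3"
    using \<open>norm x > 0\<close> by (simp add: field_simps power2_eq_square power3_eq_cube)
  also have "\<dots> \<le> GB_form a b c d (x$1) (x$2) (w$1) (w$2) / norm x ^ 3"
    using coercive[of "x$1" "x$2" "w$1" "w$2"] \<open>norm x > 0\<close>
    by (intro divide_right_mono) (simp_all add: norm_vec2)
  finally show ?thesis
    by (simp add: x_def)
qed

lemma G_B_inner_diff_ge:
  fixes u v :: "real^2"
  assumes abcd: "a \<ge> 0" "b \<ge> 0" "c \<ge> 0" "d \<ge> 0" and "\<kappa> \<ge> 0"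
    and coercive: "\<And>x1 x2 w1 w2. \<kappa> * (x1\<^sup>2 + x2\<^sup>2)\<^sup>2 * (w1\<^sup>2 + w2\<^sup>2) \<le> GB_form a b c d x1 x2 w1 w2"
  shows "\<kappa> / 4 * norm (u - v) ^ 3 \<le> (G_B a b c d u - G_B a b c d v) \<bullet> (u - v)"
proof (cases "u = v")
  case True
  then show ?thesis by simp
next
  case False
  define w where "w = u - v"
  define \<phi> where "\<phi> t = w \<bullet> G_B a b c d (v + t *\<^sub>R w)" for t
  define t0 where "t0 = (if w$1 \<noteq> 0 then - v$1 / w$1 else - v$2 / w$2)"
  have "w \<noteq> 0"
    using False by (simp add: w_def)
  then have "w$1 \<noteq> 0 \<or> w$2 \<noteq> 0"
    by (simp add: vec_eq_iff forall_2)
  then have segment_nz: "v + t *\<^sub>R w \<noteq> 0" if "t \<noteq> t0" for t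
    using that by (auto simp: t0_def vec_eq_iff forall_2 field_simps split: if_splits)
  have "\<kappa> * norm w * (norm w)\<^sup>2 / 4 \<le> \<phi> 1 - \<phi> 0"
  proof (rule increment_ge_of_deriv_ge_abs_affine)
    show "(norm w)\<^sup>2 > 0" "\<kappa> * norm w \<ge> 0"
      using \<open>w \<noteq> 0\<close> \<open>\<kappa> \<ge> 0\<close> by simp_all
    show "continuous_on {0..1} \<phi>"
      unfolding \<phi>_def using isCont_G_B_segment[OF abcd]
      by (intro continuous_at_imp_continuous_on ballI)
    fix t :: real
    assume "0 < t" "t < 1" "t \<noteq> t0"
    then show "\<exists>D. (\<phi> has_real_derivative D) (at t) \<and> \<kappa> * norm w * \<bar>v \<bullet> w + t * (norm w)\<^sup>2\<bar> \<le> D"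
      using G_B_segment_has_derivative G_B_segment_deriv_ge[OF \<open>\<kappa> \<ge> 0\<close> _ coercive] segment_nz
      unfolding \<phi>_def[abs_def] by blast
  qed
  moreover have "\<phi> 1 - \<phi> 0 = (G_B a b c d u - G_B a b c d v) \<bullet> (u - v)"
    by (simp add: \<phi>_def w_def inner_diff_right inner_commute)
  moreover have "\<kappa> * norm w * (norm w)\<^sup>2 / 4 = \<kappa> / 4 * norm (u - v) ^ 3"
    by (simp add: w_def power2_eq_square power3_eq_cube)
  ultimately show ?thesis
    by simp
qed

lemma monotone_map_if_alpha_monotone:
  assumes "alpha_monotone \<alpha> F"
  shows "monotone_map F"
proof -
  obtain C where "C > 0" and C: "\<And>u v. C * norm (u - v) powr \<alpha> \<le> (F u - F v) \<bullet> (u - v)"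
    using assms unfolding alpha_monotone_def by blast
  show ?thesis
    unfolding monotone_map_def using \<open>C > 0\<close> by (metis C order_trans zero_le_mult_iff powr_ge_zero less_le)
qed

lemma alpha_monotone_3_G_B:
  fixes a b c d :: real
  assumes pos: "a > 0" "b > 0" "c > 0" "d > 0"
    and lo: "max a d / 2 - 2 * sqrt (a * d) \<le> b + c" and hi: "b + c \<le> 2 * sqrt (a * d)"
  shows "alpha_monotone 3 (G_B a b c d)"
proof -
  define \<kappa> where "\<kappa> = min (a * c) (b * d) / (4 * (2*a + b + c + 2*d))"
  have "\<kappa> > 0"
    using pos by (simp add: \<kappa>_def)
  have "\<kappa> / 4 * norm (u - v) powr 3 \<le> (G_B a b c d u - G_B a b c d v) \<bullet> (u - v)" for u v :: "real^2"
    using G_B_inner_diff_ge[of a b c d \<kappa> u v] GB_form_ge[OF pos lo hi] pos \<open>\<kappa> > 0\<close>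
    by (cases "u = v") (simp_all add: \<kappa>_def)
  then show ?thesis
    unfolding alpha_monotone_def using \<open>\<kappa> > 0\<close> by (intro exI[of _ "\<kappa> / 4"]) auto
qed

section \<open>The conditions in terms of max a d / min a d\<close>

lemma ratio_thresholds:
  fixes M m :: real
  assumes "0 < m" "m \<le> M"
  shows ratio_le_16: "M / m \<le> 16 \<Longrightarrow> M / 2 - 2 * sqrt (M * m) \<le> 0"
    and ratio_eq_64: "M / m = 64 \<Longrightarrow> M / 2 - 2 * sqrt (M * m) = 2 * sqrt (M * m)"
    and ratio_gt_64: "M / m > 64 \<Longrightarrow> M / 2 - 2 * sqrt (M * m) > 2 * sqrt (M * m)"
proof -
  define g where "g = sqrt (M * m)"
  have g: "g \<ge> 0" "g\<^sup>2 = M * m" and "M > 0"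
    using assms by (simp_all add: g_def)
  show "M / 2 - 2 * g \<le> 0" if "M / m \<le> 16"
  proof -
    have "M * M \<le> M * (16 * m)"
      using that assms \<open>M > 0\<close> by (simp add: divide_le_eq)
    then have "M\<^sup>2 \<le> (4 * g)\<^sup>2"
      using g by (simp add: power2_eq_square algebra_simps)
    then have "M \<le> 4 * g"
      using g by (auto intro: power2_le_imp_le)
    then show ?thesis by simp
  qed
  show "M / 2 - 2 * g = 2 * g" if "M / m = 64"
  proof -
    have M: "M = 64 * m"
      using that assms by (simp add: field_simps)
    then have "g\<^sup>2 = (8 * m)\<^sup>2"
      using g by (simp add: power2_eq_square)
    then have "g = 8 * m"
      using g assms by (auto intro: power2_eq_imp_eq)
    then show ?thesis
      using M by simp
  qed
  show "M / 2 - 2 * g > 2 * g" if "M / m > 64"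
  proof -
    have "M * (64 * m) < M * M"
      using that assms \<open>M > 0\<close> by (simp add: less_divide_eq)
    then have "(8 * g)\<^sup>2 < M\<^sup>2"
      using g by (simp add: power2_eq_square algebra_simps)
    then have "8 * g < M"
      using \<open>M > 0\<close> by (auto intro: power2_less_imp_less)
    then show ?thesis by simp
  qed
qed

theorem mainTheorem6:
  fixes a b c d :: real
  assumes "a > 0" "b > 0" "c > 0" "d > 0"
  shows
    "(max a d / 2 - 2 * sqrt (a * d) \<le> b + c \<and> b + c \<le> 2 * sqrt (a * d)
        \<longrightarrow> monotone_map (G_B a b c d))
   \<and> (max a d / 2 - 2 * sqrt (a * d) < b + c \<and> b + c < 2 * sqrt (a * d)
        \<longrightarrow> alpha_monotone 3 (G_B a b c d))
   \<and> (max a d / min a d \<le> 16 \<longrightarrow>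
        ((max a d / 2 - 2 * sqrt (a * d) \<le> b + c \<and> b + c \<le> 2 * sqrt (a * d))
           \<longleftrightarrow> b + c \<le> 2 * sqrt (a * d))
      \<and> ((max a d / 2 - 2 * sqrt (a * d) < b + c \<and> b + c < 2 * sqrt (a * d))
           \<longleftrightarrow> b + c < 2 * sqrt (a * d)))
   \<and> (max a d / min a d = 64 \<longrightarrow>
        ((max a d / 2 - 2 * sqrt (a * d) \<le> b + c \<and> b + c \<le> 2 * sqrt (a * d))
           \<longleftrightarrow> b + c = 2 * sqrt (a * d))
      \<and> \<not> (max a d / 2 - 2 * sqrt (a * d) < b + c \<and> b + c < 2 * sqrt (a * d)))
   \<and> (max a d / min a d > 64 \<longrightarrow>
        \<not> (max a d / 2 - 2 * sqrt (a * d) \<le> b + c \<and> b + c \<le> 2 * sqrt (a * d)))"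
proof -
  have "sqrt (a * d) = sqrt (max a d * min a d)"
    by (simp add: max_def min_def mult.commute)
  moreover have "0 < min a d" "min a d \<le> max a d"
    using assms by simp_all
  note ratio = ratio_thresholds[OF this, folded calculation]
  have "alpha_monotone 3 (G_B a b c d)"
    if "max a d / 2 - 2 * sqrt (a * d) \<le> b + c" "b + c \<le> 2 * sqrt (a * d)"
    using alpha_monotone_3_G_B[OF assms that] .
  then show ?thesis
    using ratio assms monotone_map_if_alpha_monotone by (intro conjI impI) force+
qed

end
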